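(* For $n\ge 4$, the dom-bondage number of the cycle $C_n$ is $B_{dom}(C_n)=3$ if $n\equiv 2\pmod 4$, and $B_{dom}(C_n)=2$ otherwise.
   Context: A dominated coloring of a graph is a proper coloring in which every color class is dominated by at least one vertex, i.e. for each color class $C$ there is a vertex adjacent to every vertex of $C$; $\chi_{dom}(G)$ is the minimum number of colors in a dominated coloring. The dom-bondage number $B_{dom}(G)$ is the minimum number of edges of $G$ whose removal changes the dominated chromatic number of $G$. *)

theory Defs
  imports Main
begin

definition simple_graph :: "'a set \<Rightarrow> 'a set set \<Rightarrow> bool" where
  "simple_graph V E \<longleftrightarrow> finite V \<and> (\<forall>e\<in>E. \<exists>u v. u \<in> V \<and> v \<in> V \<and> u \<noteq> v \<and> e = {u, v})"

definition proper_coloring :: "'a set \<Rightarrow> 'a set set \<Rightarrow> ('a \<Rightarrow> nat) \<Rightarrow> bool" where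
  "proper_coloring V E c \<longleftrightarrow> (\<forall>u\<in>V. \<forall>v\<in>V. {u, v} \<in> E \<longrightarrow> c u \<noteq> c v)"

definition dominated_coloring :: "'a set \<Rightarrow> 'a set set \<Rightarrow> ('a \<Rightarrow> nat) \<Rightarrow> bool" where
  "dominated_coloring V E c \<longleftrightarrow> proper_coloring V E c \<and>
     (\<forall>i \<in> c ` V. \<exists>w\<in>V. \<forall>u\<in>V. c u = i \<longrightarrow> {u, w} \<in> E)"

definition has_dominated_coloring :: "'a set \<Rightarrow> 'a set set \<Rightarrow> bool" where
  "has_dominated_coloring V E \<longleftrightarrow> (\<exists>c. dominated_coloring V E c)"

definition chi_dom :: "'a set \<Rightarrow> 'a set set \<Rightarrow> nat" where
  "chi_dom V E = (LEAST k. \<exists>c. dominated_coloring V E c \<and> card (c ` V) = k)"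

definition B_dom :: "'a set \<Rightarrow> 'a set set \<Rightarrow> nat" where
  "B_dom V E = (LEAST m. \<exists>F. F \<subseteq> E \<and> card F = m \<and> has_dominated_coloring V (E - F)
                              \<and> chi_dom V (E - F) \<noteq> chi_dom V E)"

definition cycle_edges :: "nat \<Rightarrow> nat set set" where
  "cycle_edges n = {{i, (i + 1) mod n} | i. i < n}"

end

theory Submission
  imports Defs
begin

(* In a dominated colouring of a spanning subgraph of C_n every colour class lies in the
   neighbourhood of its dominator, so it has at most two vertices. The dominators w of the
   two-vertex classes keep both cycle edges at w, and w and w + 2 are never both dominators,
   as their classes would share w + 1. Counting gives at least ceil(n/2) colours, and one more
   when n = 4q + 2, because then the shift by 2 splits the vertices into two orbits of odd
   length; the colouring 2 (i div 4) + i mod 2 of a path attains these bounds. Removing one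
   edge, or two when n = 4q + 2, leaves paths that are coloured within the same bound, while
   removing the matching {n - 1, 0}, {1, 2} (and {3, 4} when n = 4q + 2) leaves too few
   vertices able to dominate a two-vertex class. *)

section \<open>Dominated colourings of arbitrary graphs\<close>

lemma chi_dom_le: "dominated_coloring V E c \<Longrightarrow> chi_dom V E \<le> card (c ` V)"
  unfolding chi_dom_def by (rule Least_le) blast

lemma chi_dom_attained:
  assumes "has_dominated_coloring V E"
  obtains c where "dominated_coloring V E c" "card (c ` V) = chi_dom V E"
proof -
  have "\<exists>c. dominated_coloring V E c \<and> card (c ` V) = chi_dom V E"
    using assms unfolding chi_dom_def has_dominated_coloring_def by - (rule LeastI_ex, blast)
  with that show ?thesis by blast
qed

lemma dominated_coloring_neighbour: "dominated_coloring V E c \<Longrightarrow> u \<in> V \<Longrightarrow> \<exists>w\<in>V. {u, w} \<in> E"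
  unfolding dominated_coloring_def by blast

definition classes_dominated :: "'a set \<Rightarrow> 'a set set \<Rightarrow> ('a \<Rightarrow> nat) \<Rightarrow> bool" where
  "classes_dominated V E c \<longleftrightarrow> (\<forall>u\<in>V. \<exists>w\<in>V. \<forall>v\<in>V. c v = c u \<longrightarrow> {v, w} \<in> E)"

definition triangle_free :: "'a set set \<Rightarrow> bool" where
  "triangle_free E \<longleftrightarrow> (\<forall>u v w. {u, v} \<in> E \<longrightarrow> {v, w} \<in> E \<longrightarrow> {u, w} \<notin> E)"

lemma classes_dominated_mono: "classes_dominated V E c \<Longrightarrow> E \<subseteq> E' \<Longrightarrow> classes_dominated V E' c"
  unfolding classes_dominated_def by blast

lemma dominated_coloring_iff_classes_dominated:
  assumes "triangle_free E"
  shows "dominated_coloring V E c \<longleftrightarrow> classes_dominated V E c"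
proof
  assume "dominated_coloring V E c"
  then show "classes_dominated V E c"
    unfolding dominated_coloring_def classes_dominated_def by blast
next
  assume dom: "classes_dominated V E c"
  have "c u \<noteq> c v" if "u \<in> V" "v \<in> V" "{u, v} \<in> E" for u v
  proof
    assume "c u = c v"
    obtain w where "\<forall>x\<in>V. c x = c u \<longrightarrow> {x, w} \<in> E"
      using dom \<open>u \<in> V\<close> unfolding classes_dominated_def by blast
    then have "{u, w} \<in> E" "{v, w} \<in> E"
      using that \<open>c u = c v\<close> by auto
    then show False
      using assms \<open>{u, v} \<in> E\<close> unfolding triangle_free_def by blast
  qed
  then show "dominated_coloring V E c"
    using dom unfolding dominated_coloring_def proper_coloring_def classes_dominated_def by blast
qed

lemma dominated_coloring_image_graph:
  assumes f: "bij_betw f V V'" and E: "E \<subseteq> Pow V"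
    and c: "dominated_coloring V' (image f ` E) c"
  shows "dominated_coloring V E (c \<circ> f)"
proof -
  have inj: "inj_on (image f) (Pow V)"
    using f by (simp add: bij_betw_def inj_on_image_Pow)
  have edge: "{f u, f v} \<in> image f ` E \<longleftrightarrow> {u, v} \<in> E" if "u \<in> V" "v \<in> V" for u v
    using inj_on_image_mem_iff[OF inj, of "{u, v}" E] that E by simp
  have fV: "f ` V = V'"
    using f by (simp add: bij_betw_def)
  show ?thesis
    unfolding dominated_coloring_def proper_coloring_def
  proof (intro conjI ballI impI)
    fix u v assume "u \<in> V" "v \<in> V" "{u, v} \<in> E"
    then show "(c \<circ> f) u \<noteq> (c \<circ> f) v"
      using c edge fV unfolding dominated_coloring_def proper_coloring_def by auto
  next
    fix i assume "i \<in> (c \<circ> f) ` V"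
    then have "i \<in> c ` V'"
      using fV image_comp by metis
    then obtain w' where "w' \<in> V'" and w': "\<forall>u'\<in>V'. c u' = i \<longrightarrow> {u', w'} \<in> image f ` E"
      using c unfolding dominated_coloring_def by blast
    then obtain w where "w \<in> V" "w' = f w"
      using fV by auto
    then have "\<forall>u\<in>V. (c \<circ> f) u = i \<longrightarrow> {u, w} \<in> E"
      using w' edge fV by auto
    then show "\<exists>w\<in>V. \<forall>u\<in>V. (c \<circ> f) u = i \<longrightarrow> {u, w} \<in> E"
      using \<open>w \<in> V\<close> by blast
  qed
qed

lemma chi_dom_image_graph:
  assumes f: "bij_betw f V V'" and E: "E \<subseteq> Pow V"
  shows "chi_dom V' (image f ` E) = chi_dom V E"
    and "has_dominated_coloring V' (image f ` E) \<longleftrightarrow> has_dominated_coloring V E"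
proof -
  let ?g = "inv_into V f"
  have g: "bij_betw ?g V' V"
    using f by (rule bij_betw_inv_into)
  have E': "image f ` E \<subseteq> Pow V'"
    using E f by (auto simp: bij_betw_def)
  have cancel: "?g ` f ` e = e" if "e \<in> E" for e
    by (rule inv_into_image_cancel) (use that E f in \<open>auto simp: bij_betw_def\<close>)
  have "image ?g ` image f ` E = (\<lambda>e. ?g ` f ` e) ` E"
    by (rule image_image)
  also have "\<dots> = (\<lambda>e. e) ` E"
    by (rule image_cong[OF refl cancel])
  finally have recover: "image ?g ` image f ` E = E"
    by simp
  have fV: "f ` V = V'" and gV: "?g ` V' = V"
    using f g by (simp_all add: bij_betw_def)
  have counts: "(\<exists>c. dominated_coloring V' (image f ` E) c \<and> card (c ` V') = k) \<longleftrightarrow>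
      (\<exists>c. dominated_coloring V E c \<and> card (c ` V) = k)" for k
  proof
    assume "\<exists>c. dominated_coloring V' (image f ` E) c \<and> card (c ` V') = k"
    then obtain c where "dominated_coloring V' (image f ` E) c" "card (c ` V') = k"
      by blast
    then show "\<exists>c. dominated_coloring V E c \<and> card (c ` V) = k"
      using dominated_coloring_image_graph[OF f E] fV by (metis image_comp)
  next
    assume "\<exists>c. dominated_coloring V E c \<and> card (c ` V) = k"
    then obtain c where "dominated_coloring V (image ?g ` image f ` E) c" "card (c ` V) = k"
      unfolding recover by blast
    then show "\<exists>c. dominated_coloring V' (image f ` E) c \<and> card (c ` V') = k"
      using dominated_coloring_image_graph[OF g E'] gV by (metis image_comp)
  qed
  show "chi_dom V' (image f ` E) = chi_dom V E"
    unfolding chi_dom_def counts ..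
  show "has_dominated_coloring V' (image f ` E) \<longleftrightarrow> has_dominated_coloring V E"
    unfolding has_dominated_coloring_def using counts by blast
qed

lemma card_le_card_image_add_card_pairs:
  assumes "finite V" "\<And>i. i \<in> c ` V \<Longrightarrow> card {v \<in> V. c v = i} \<le> 2"
  shows "card V \<le> card (c ` V) + card {i \<in> c ` V. card {v \<in> V. c v = i} = 2}"
proof -
  define K2 where "K2 = {i \<in> c ` V. card {v \<in> V. c v = i} = 2}"
  have "V = (\<Union>i\<in>c ` V. {v \<in> V. c v = i})"
    by blast
  then have "card V \<le> (\<Sum>i\<in>c ` V. card {v \<in> V. c v = i})"
    using card_UN_le[of "c ` V" "\<lambda>i. {v \<in> V. c v = i}"] assms(1) by simp
  also have "\<dots> \<le> (\<Sum>i\<in>c ` V. 1 + (if i \<in> K2 then 1 else 0))"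
    by (rule sum_mono) (use assms(2) in \<open>fastforce simp: K2_def\<close>)
  also have "\<dots> = card (c ` V) + card (c ` V \<inter> K2)"
    unfolding sum.distrib using assms(1) sum.inter_restrict[of "c ` V" "\<lambda>_. 1::nat" K2] by simp
  also have "c ` V \<inter> K2 = K2"
    unfolding K2_def by blast
  finally show ?thesis
    unfolding K2_def .
qed

lemma cycle_edgeI: "i < n \<Longrightarrow> {i, (i + 1) mod n} \<in> cycle_edges n"
  unfolding cycle_edges_def by blast

lemma cycle_edge_subset: "e \<in> cycle_edges n \<Longrightarrow> e \<subseteq> {0..<n}"
  unfolding cycle_edges_def by auto

lemma finite_cycle_edges: "finite (cycle_edges n)"
  unfolding cycle_edges_def by auto

lemma Suc_mod_if: "i < n \<Longrightarrow> Suc i mod n = (if Suc i = n then 0 else Suc i)"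
  by (simp add: mod_Suc)

lemma cycle_edge_iff:
  assumes "2 \<le> n"
  shows "{a, b} \<in> cycle_edges n \<longleftrightarrow>
    a < n \<and> b < n \<and> (b = a + 1 \<or> a = b + 1 \<or> (a = n - 1 \<and> b = 0) \<or> (a = 0 \<and> b = n - 1))"
proof
  assume "{a, b} \<in> cycle_edges n"
  then obtain i where "i < n" "{a, b} = {i, (i + 1) mod n}"
    unfolding cycle_edges_def by blast
  then show "a < n \<and> b < n \<and> (b = a + 1 \<or> a = b + 1 \<or> (a = n - 1 \<and> b = 0) \<or> (a = 0 \<and> b = n - 1))"
    using assms by (auto simp: doubleton_eq_iff Suc_mod_if split: if_splits)
next
  assume ab: "a < n \<and> b < n \<and> (b = a + 1 \<or> a = b + 1 \<or> (a = n - 1 \<and> b = 0) \<or> (a = 0 \<and> b = n - 1))"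
  then have "{a, b} = {a, (a + 1) mod n} \<or> {a, b} = {b, (b + 1) mod n}"
    using assms by (auto simp: Suc_mod_if)
  then show "{a, b} \<in> cycle_edges n"
    using ab cycle_edgeI by metis
qed

lemma cycle_path_edge: "z + 1 < n \<Longrightarrow> {z, z + 1} \<in> cycle_edges n"
  using cycle_edgeI[of z n] by simp

lemma cycle_edge_before:
  assumes "u < n"
  shows "{(u + n - 1) mod n, u} \<in> cycle_edges n"
proof -
  have "((u + n - 1) mod n + 1) mod n = (u + n - 1 + 1) mod n"
    by (rule mod_add_left_eq)
  also have "\<dots> = u"
    using assms by simp
  finally have succ: "((u + n - 1) mod n + 1) mod n = u" .
  have "{(u + n - 1) mod n, ((u + n - 1) mod n + 1) mod n} \<in> cycle_edges n"
    by (rule cycle_edgeI) (use assms in simp)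
  then show ?thesis
    unfolding succ .
qed

lemma mod_add_two_neq: "w < n \<Longrightarrow> 3 \<le> n \<Longrightarrow> (w + 2) mod n \<noteq> (w::nat)"
  by (cases "w + 2 < n") (auto simp: mod_if)

lemma cycle_triangle_free:
  assumes "4 \<le> n" "{u, v} \<in> cycle_edges n" "{v, w} \<in> cycle_edges n"
  shows "{u, w} \<notin> cycle_edges n"
proof -
  have "2 \<le> n" using assms(1) by simp
  from assms(2,3)[unfolded cycle_edge_iff[OF this]] assms(1) show ?thesis
    unfolding cycle_edge_iff[OF \<open>2 \<le> n\<close>] by linarith
qed

lemma triangle_free_cycle_subgraph: "4 \<le> n \<Longrightarrow> E \<subseteq> cycle_edges n \<Longrightarrow> triangle_free E"
  unfolding triangle_free_def using cycle_triangle_free by blast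

definition cycle_neighbours :: "nat \<Rightarrow> nat \<Rightarrow> nat set" where
  "cycle_neighbours n w = {v. {v, w} \<in> cycle_edges n}"

lemma cycle_neighbours_subset: "cycle_neighbours n w \<subseteq> {(w + n - 1) mod n, (w + 1) mod n}"
proof
  fix v assume "v \<in> cycle_neighbours n w"
  then obtain i where i: "i < n" "{v, w} = {i, (i + 1) mod n}"
    unfolding cycle_neighbours_def cycle_edges_def by blast
  have "((i + 1) mod n + n - 1) mod n = i"
    using i(1) by (auto simp: Suc_mod_if)
  then show "v \<in> {(w + n - 1) mod n, (w + 1) mod n}"
    using i by (auto simp: doubleton_eq_iff)
qed

lemma card_cycle_neighbours: "card (cycle_neighbours n w) \<le> 2"
  by (rule order_trans[OF card_mono[OF _ cycle_neighbours_subset]]) (auto simp: card_insert_if)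

lemma cycle_neighbours_share_middle:
  assumes "w < n"
  shows "(w + 1) mod n \<in> cycle_neighbours n w \<inter> cycle_neighbours n ((w + 2) mod n)"
proof -
  have "{w, (w + 1) mod n} \<in> cycle_edges n" "{(w + 1) mod n, ((w + 1) mod n + 1) mod n} \<in> cycle_edges n"
    using assms by (rule cycle_edgeI, intro cycle_edgeI) simp
  moreover have "((w + 1) mod n + 1) mod n = (w + 2) mod n"
    by (simp add: mod_simps)
  ultimately show ?thesis
    unfolding cycle_neighbours_def by (simp add: insert_commute)
qed

lemma cycle_minus_edges_keeps_edge_at:
  assumes "has_dominated_coloring {0..<n} (cycle_edges n - G)" "u < n"
  shows "{(u + n - 1) mod n, u} \<notin> G \<or> {u, (u + 1) mod n} \<notin> G"
proof -
  obtain c where "dominated_coloring {0..<n} (cycle_edges n - G) c"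
    using assms(1) unfolding has_dominated_coloring_def by blast
  then obtain w where w: "{u, w} \<in> cycle_edges n - G"
    using dominated_coloring_neighbour assms(2) by fastforce
  then have "w \<in> cycle_neighbours n u"
    unfolding cycle_neighbours_def by (simp add: insert_commute)
  then have "w = (u + n - 1) mod n \<or> w = (u + 1) mod n"
    using cycle_neighbours_subset by blast
  then show ?thesis
    using w by (auto simp: insert_commute)
qed

section \<open>Rotations of the cycle\<close>

definition cycle_rotate :: "nat \<Rightarrow> nat \<Rightarrow> nat \<Rightarrow> nat" where
  "cycle_rotate n s x = (x + s) mod n"

lemma cycle_rotate_bij:
  assumes "0 < n"
  shows "bij_betw (cycle_rotate n s) {0..<n} {0..<n}"
proof -
  have "inj_on (cycle_rotate n s) {0..<n}"
  proof (rule linorder_inj_onI')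
    fix i j assume "i \<in> {0..<n}" "j \<in> {0..<n}" "i < j"
    then have "\<not> n dvd (j + s) - (i + s)"
      using nat_dvd_not_less by simp
    then have "(j + s) mod n \<noteq> (i + s) mod n"
      using mod_eq_dvd_iff_nat[where m = "j + s" and n = "i + s" and q = n] \<open>i < j\<close> by simp
    then show "cycle_rotate n s i \<noteq> cycle_rotate n s j"
      unfolding cycle_rotate_def by metis
  qed
  moreover have "cycle_rotate n s ` {0..<n} \<subseteq> {0..<n}"
    using assms by (auto simp: cycle_rotate_def)
  ultimately show ?thesis
    unfolding bij_betw_def using endo_inj_surj[OF finite_atLeastLessThan] by blast
qed

lemma cycle_rotate_succ: "cycle_rotate n s ((i + 1) mod n) = (cycle_rotate n s i + 1) mod n"
  unfolding cycle_rotate_def by (metis mod_add_left_eq add.assoc add.commute)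

lemma inj_on_image_cycle_rotate:
  assumes "0 < n"
  shows "inj_on (image (cycle_rotate n s)) (cycle_edges n)"
  by (rule inj_on_subset[OF inj_on_image_Pow[OF bij_betw_imp_inj_on[OF cycle_rotate_bij[OF assms]]]])
    (use cycle_edge_subset in blast)

lemma cycle_rotate_edges:
  assumes "0 < n"
  shows "image (cycle_rotate n s) ` cycle_edges n = cycle_edges n"
proof (rule endo_inj_surj[OF finite_cycle_edges _ inj_on_image_cycle_rotate[OF assms]])
  show "image (cycle_rotate n s) ` cycle_edges n \<subseteq> cycle_edges n"
  proof
    fix e assume "e \<in> image (cycle_rotate n s) ` cycle_edges n"
    then obtain i where "i < n" "e = cycle_rotate n s ` {i, (i + 1) mod n}"
      unfolding cycle_edges_def by blast
    then have "e = {cycle_rotate n s i, (cycle_rotate n s i + 1) mod n}"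
      unfolding cycle_rotate_succ[symmetric] by simp
    moreover have "cycle_rotate n s i < n"
      using assms by (simp add: cycle_rotate_def)
    ultimately show "e \<in> cycle_edges n"
      using cycle_edgeI by simp
  qed
qed

lemma chi_dom_cycle_minus_rotate:
  fixes s :: nat
  assumes "0 < n" "F \<subseteq> cycle_edges n"
  defines "G \<equiv> image (cycle_rotate n s) ` F"
  shows "chi_dom {0..<n} (cycle_edges n - G) = chi_dom {0..<n} (cycle_edges n - F)"
    and "has_dominated_coloring {0..<n} (cycle_edges n - G) \<longleftrightarrow>
      has_dominated_coloring {0..<n} (cycle_edges n - F)"
proof -
  have bij: "bij_betw (cycle_rotate n s) {0..<n} {0..<n}"
    using assms(1) by (rule cycle_rotate_bij)
  have Pow: "cycle_edges n \<subseteq> Pow {0..<n}"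
    using cycle_edge_subset by blast
  then have sub: "cycle_edges n - F \<subseteq> Pow {0..<n}"
    by blast
  have "image (cycle_rotate n s) ` (cycle_edges n - F) =
      image (cycle_rotate n s) ` cycle_edges n - G"
    unfolding G_def
    by (rule inj_on_image_set_diff[OF inj_on_image_Pow[OF bij_betw_imp_inj_on[OF bij]]])
      (use Pow assms(2) in auto)
  also have "\<dots> = cycle_edges n - G"
    unfolding cycle_rotate_edges[OF assms(1)] ..
  finally have rotated: "image (cycle_rotate n s) ` (cycle_edges n - F) = cycle_edges n - G" .
  show "chi_dom {0..<n} (cycle_edges n - G) = chi_dom {0..<n} (cycle_edges n - F)"
    using chi_dom_image_graph(1)[OF bij sub] unfolding rotated .
  show "has_dominated_coloring {0..<n} (cycle_edges n - G) \<longleftrightarrow>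
      has_dominated_coloring {0..<n} (cycle_edges n - F)"
    using chi_dom_image_graph(2)[OF bij sub] unfolding rotated .
qed

lemma cycle_rotate_to_last_edge:
  assumes "j < n"
  shows "cycle_rotate n (n - 1 - j) ` {j, (j + 1) mod n} = {n - 1, 0}"
proof -
  have "cycle_rotate n (n - 1 - j) ((j + 1) mod n) = (n - 1 + 1) mod n"
    unfolding cycle_rotate_succ using assms by (simp add: cycle_rotate_def)
  then show ?thesis
    using assms by (simp add: cycle_rotate_def)
qed

lemma cycle_rotate_two_edges:
  assumes "4 \<le> n" "F \<subseteq> cycle_edges n" "card F = 2"
  obtains s k where "k < n" "k \<noteq> n - 1"
    "image (cycle_rotate n s) ` F = {{n - 1, 0}, {k, (k + 1) mod n}}"
proof -
  obtain e1 e2 where F: "F = {e1, e2}" "e1 \<noteq> e2"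
    using assms(3) unfolding card_2_iff by blast
  obtain j where j: "j < n" "e1 = {j, (j + 1) mod n}"
    using F(1) assms(2) unfolding cycle_edges_def by blast
  obtain i where "e2 = {i, (i + 1) mod n}"
    using F(1) assms(2) unfolding cycle_edges_def by blast
  let ?r = "cycle_rotate n (n - 1 - j)"
  define k where "k = ?r i"
  have e1: "?r ` e1 = {n - 1, 0}"
    using cycle_rotate_to_last_edge[OF j(1)] j(2) by simp
  have e2: "?r ` e2 = {k, (k + 1) mod n}"
    unfolding \<open>e2 = {i, (i + 1) mod n}\<close> k_def by (simp only: image_insert image_empty cycle_rotate_succ)
  have "?r ` e1 \<noteq> ?r ` e2"
    using inj_on_image_cycle_rotate[of n] assms(1,2) F unfolding inj_on_def by auto
  then have "k \<noteq> n - 1"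
    unfolding e1 e2 using assms(1) by auto
  moreover have "k < n"
    using assms(1) by (simp add: k_def cycle_rotate_def)
  ultimately show ?thesis
    using that[of k "n - 1 - j"] e1 e2 F(1) by simp
qed

lemma chi_dom_cycle_subgraph_le:
  assumes "4 \<le> n" "E \<subseteq> cycle_edges n" "classes_dominated {0..<n} E c"
  shows "chi_dom {0..<n} E \<le> card (c ` {0..<n})"
  using assms(3)
  unfolding dominated_coloring_iff_classes_dominated[OF triangle_free_cycle_subgraph[OF assms(1,2)], symmetric]
  by (rule chi_dom_le)

section \<open>Colouring paths\<close>

(* Colour classes {4k, 4k + 2} and {4k + 1, 4k + 3}, dominated by 4k + 1 and 4k + 2
   (by 4k - 1 and 4k when the path ends earlier). *)
definition path_coloring :: "nat \<Rightarrow> nat" where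
  "path_coloring i = 2 * (i div 4) + i mod 2"

(* ceil(n/2), plus one if n mod 4 = 2: the dominated chromatic number of the path and of
   the cycle on n >= 4 vertices. *)
definition dom_chi :: "nat \<Rightarrow> nat" where
  "dom_chi n = 2 * (n div 4) + min (n mod 4) 2"

lemma nat_mod4_decomp:
  fixes x :: nat
  obtains q r where "x = 4 * q + r" "r < 4"
proof (rule that)
  show "x = 4 * (x div 4) + x mod 4" "x mod 4 < 4"
    by simp_all
qed

lemma less_4_cases: "(r::nat) < 4 \<Longrightarrow> r = 0 \<or> r = 1 \<or> r = 2 \<or> r = 3"
  by linarith

lemma dom_chi_eq: "r < 4 \<Longrightarrow> dom_chi (4 * q + r) = 2 * q + min r 2"
  by (simp add: dom_chi_def)

lemma mod_2_four_mul_add: "(4 * q + r) mod 2 = (r::nat) mod 2"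
proof -
  have "4 * q + r = r + 2 * (2 * q)"
    by simp
  then show ?thesis
    by (simp only: mod_mult_self2)
qed

lemma path_coloring_eq: "r < 4 \<Longrightarrow> path_coloring (4 * q + r) = 2 * q + r mod 2"
  by (simp add: path_coloring_def mod_2_four_mul_add)

lemma path_coloring_less_dom_chi:
  assumes "x < a"
  shows "path_coloring x < dom_chi a"
proof -
  obtain q r where x: "x = 4 * q + r" "r < 4" by (rule nat_mod4_decomp)
  obtain p t where a: "a = 4 * p + t" "t < 4" by (rule nat_mod4_decomp)
  have "2 * q + r mod 2 < 2 * p + min t 2"
    using less_4_cases[OF x(2)] less_4_cases[OF a(2)] assms unfolding x(1) a(1)
    by (elim disjE; simp; presburger)
  then show ?thesis
    unfolding x(1) a(1) path_coloring_eq[OF x(2)] dom_chi_eq[OF a(2)] .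
qed

lemma card_path_coloring_image_le: "card (path_coloring ` {0..<a}) \<le> dom_chi a"
proof -
  have "path_coloring ` {0..<a} \<subseteq> {0..<dom_chi a}"
    using path_coloring_less_dom_chi by auto
  from card_mono[OF finite_atLeastLessThan this] show ?thesis
    by simp
qed

lemma path_coloring_eq_iff:
  "path_coloring y = path_coloring x \<longleftrightarrow>
    y = 4 * (x div 4) + x mod 2 \<or> y = 4 * (x div 4) + x mod 2 + 2"
proof -
  obtain q r where x: "x = 4 * q + r" "r < 4" by (rule nat_mod4_decomp)
  obtain p t where y: "y = 4 * p + t" "t < 4" by (rule nat_mod4_decomp)
  have "x div 4 = q" "x mod 2 = r mod 2"
    using x by (simp_all add: mod_2_four_mul_add)
  moreover have "2 * p + t mod 2 = 2 * q + r mod 2 \<longleftrightarrow>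
      4 * p + t = 4 * q + r mod 2 \<or> 4 * p + t = 4 * q + r mod 2 + 2"
    using less_4_cases[OF x(2)] less_4_cases[OF y(2)] by (elim disjE; simp; presburger)
  ultimately show ?thesis
    unfolding y(1) path_coloring_eq[OF y(2)] unfolding x(1) path_coloring_eq[OF x(2)]
    by (simp only: x(1)[symmetric])
qed

lemma path_coloring_class_dominator:
  assumes "2 \<le> a" "x < a"
  obtains w where "w < a"
    and "\<And>y. y < a \<Longrightarrow> path_coloring y = path_coloring x \<Longrightarrow> y = w + 1 \<or> w = y + 1"
proof -
  define b where "b = 4 * (x div 4) + x mod 2"
  have same_colour: "path_coloring y = path_coloring x \<longleftrightarrow> y = b \<or> y = b + 2" for y
    unfolding b_def by (rule path_coloring_eq_iff)
  then have "b \<le> x"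
    by (metis le_add1 order_refl)
  show ?thesis
  proof (cases "b + 1 < a")
    case True
    then show ?thesis
      by (intro that[of "b + 1"]) (auto simp: same_colour)
  next
    case False
    then have "b = a - 1"
      using \<open>b \<le> x\<close> assms(2) by linarith
    then show ?thesis
      using assms by (intro that[of "b - 1"]) (auto simp: same_colour)
  qed
qed

lemma dom_chi_add_le:
  assumes "(a + b) mod 4 = 2"
  shows "dom_chi a + dom_chi b \<le> dom_chi (a + b)"
proof -
  obtain q r where a: "a = 4 * q + r" "r < 4" by (rule nat_mod4_decomp)
  obtain p t where b: "b = 4 * p + t" "t < 4" by (rule nat_mod4_decomp)
  obtain m where n: "a + b = 4 * m + 2"
    using assms div_mult_mod_eq[of "a + b" 4] by (metis add.commute mult.commute)
  have "2 * q + min r 2 + (2 * p + min t 2) \<le> 2 * m + min 2 2"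
    using less_4_cases[OF a(2)] less_4_cases[OF b(2)] n unfolding a(1) b(1)
    by (elim disjE; simp; presburger)
  moreover have "dom_chi a = 2 * q + min r 2"
    unfolding a(1) by (rule dom_chi_eq[OF a(2)])
  moreover have "dom_chi b = 2 * p + min t 2"
    unfolding b(1) by (rule dom_chi_eq[OF b(2)])
  moreover have "dom_chi (a + b) = 2 * m + min 2 2"
    unfolding n by (rule dom_chi_eq) simp
  ultimately show ?thesis
    by simp
qed

lemma dom_chi_le_from_dominators:
  assumes "n \<le> k + w" "2 * w \<le> n" "n mod 4 = 2 \<Longrightarrow> 2 * w < n"
  shows "dom_chi n \<le> k"
proof -
  obtain q r where n: "n = 4 * q + r" "r < 4" by (rule nat_mod4_decomp)
  have "n mod 4 = r"
    using n by simp
  then have "r = 2 \<Longrightarrow> 2 * w < n"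
    using assms(3) by simp
  then have "2 * q + min r 2 \<le> k"
    using less_4_cases[OF n(2)] assms(1,2) unfolding n(1) by (elim disjE; simp; presburger)
  then show ?thesis
    unfolding n(1) dom_chi_eq[OF n(2)] .
qed

lemma dom_chi_less_from_dominators:
  assumes "n \<le> k + x" "2 * x + 2 \<le> n" "n mod 4 = 2 \<Longrightarrow> 2 * x + 4 \<le> n"
  shows "dom_chi n < k"
proof -
  have "dom_chi n \<le> k - 1"
    by (rule dom_chi_le_from_dominators[of n "k - 1" "x + 1"]) (use assms in auto)
  then show ?thesis
    using assms(1,2) by linarith
qed

lemma segment_class_dominated:
  assumes "2 \<le> a" "s + a \<le> n"
    and path: "\<And>z. s \<le> z \<Longrightarrow> z + 1 < s + a \<Longrightarrow> {z, z + 1} \<in> E"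
    and inside: "\<And>v. s \<le> v \<Longrightarrow> v < s + a \<Longrightarrow> c v = off + path_coloring (v - s)"
    and outside: "\<And>v. v < n \<Longrightarrow> \<not> (s \<le> v \<and> v < s + a) \<Longrightarrow> c v < off \<or> off + dom_chi a \<le> c v"
    and u: "s \<le> u" "u < s + a"
  shows "\<exists>w\<in>{0..<n}. \<forall>v\<in>{0..<n}. c v = c u \<longrightarrow> {v, w} \<in> E"
proof -
  obtain w where "w < a"
    and w: "\<And>y. y < a \<Longrightarrow> path_coloring y = path_coloring (u - s) \<Longrightarrow> y = w + 1 \<or> w = y + 1"
    using path_coloring_class_dominator[OF assms(1)] u by (metis less_diff_conv2 add.commute)
  have cu: "c u = off + path_coloring (u - s)" "path_coloring (u - s) < dom_chi a"
    using inside[OF u] path_coloring_less_dom_chi u by auto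
  have "{v, s + w} \<in> E" if "v < n" "c v = c u" for v
  proof -
    have v: "s \<le> v" "v < s + a"
      using outside[OF \<open>v < n\<close>] cu \<open>c v = c u\<close> by force+
    then have "v - s = w + 1 \<or> w = v - s + 1"
      using w inside cu \<open>c v = c u\<close> by simp
    then have "v = s + w + 1 \<or> s + w = v + 1"
      using v by linarith
    then show ?thesis
      using path[of "s + w"] path[of v] v \<open>w < a\<close> by (auto simp: insert_commute)
  qed
  then show ?thesis
    using \<open>w < a\<close> assms(2) by (intro bexI[of _ "s + w"]) auto
qed

lemma path_classes_dominated:
  assumes "4 \<le> n"
  shows "classes_dominated {0..<n} (cycle_edges n - {{n - 1, 0}}) path_coloring"
proof -
  let ?E = "cycle_edges n - {{n - 1, 0}}"
  have path: "{z, z + 1} \<in> ?E" if "z + 1 < n" for z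
    using that assms cycle_path_edge[of z n] by (auto simp: doubleton_eq_iff)
  have "\<exists>w\<in>{0..<n}. \<forall>v\<in>{0..<n}. path_coloring v = path_coloring u \<longrightarrow> {v, w} \<in> ?E"
    if "u < n" for u
    by (rule segment_class_dominated[where a = n and s = 0 and off = 0])
      (use assms that path in auto)
  then show ?thesis
    unfolding classes_dominated_def by simp
qed

lemma two_paths_classes_dominated:
  assumes "4 \<le> n" "1 \<le> k" "k + 3 \<le> n"
  defines "c \<equiv> \<lambda>i. if i \<le> k then path_coloring i else dom_chi (k + 1) + path_coloring (i - (k + 1))"
  shows "classes_dominated {0..<n} (cycle_edges n - {{n - 1, 0}, {k, k + 1}}) c"
    and "card (c ` {0..<n}) \<le> dom_chi (k + 1) + dom_chi (n - (k + 1))"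
proof -
  let ?E = "cycle_edges n - {{n - 1, 0}, {k, k + 1}}"
  have path: "{z, z + 1} \<in> ?E" if "z + 1 < n" "z \<noteq> k" for z
    using that assms(1) cycle_path_edge[of z n] by (auto simp: doubleton_eq_iff)
  have "\<exists>w\<in>{0..<n}. \<forall>v\<in>{0..<n}. c v = c u \<longrightarrow> {v, w} \<in> ?E" if "u < n" for u
  proof (cases "u \<le> k")
    case True
    show ?thesis
      by (rule segment_class_dominated[where a = "k + 1" and s = 0 and off = 0])
        (use assms(2,3) True path in \<open>auto simp: c_def\<close>)
  next
    case False
    have first_path: "path_coloring v < dom_chi (k + 1)" if "v \<le> k" for v
      using that by (simp add: path_coloring_less_dom_chi)
    show ?thesis
      by (rule segment_class_dominated[where a = "n - (k + 1)" and s = "k + 1" and off = "dom_chi (k + 1)"])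
        (use assms(3) False \<open>u < n\<close> path first_path in \<open>auto simp: c_def\<close>)
  qed
  then show "classes_dominated {0..<n} ?E c"
    unfolding classes_dominated_def by simp
  have "c i < dom_chi (k + 1) + dom_chi (n - (k + 1))" if "i < n" for i
  proof (cases "i \<le> k")
    case True
    then show ?thesis
      using path_coloring_less_dom_chi[of i "k + 1"] by (simp add: c_def)
  next
    case False
    then show ?thesis
      using path_coloring_less_dom_chi[of "i - (k + 1)" "n - (k + 1)"] that by (simp add: c_def)
  qed
  then have "c ` {0..<n} \<subseteq> {0..<dom_chi (k + 1) + dom_chi (n - (k + 1))}"
    by auto
  from card_mono[OF finite_atLeastLessThan this]
  show "card (c ` {0..<n}) \<le> dom_chi (k + 1) + dom_chi (n - (k + 1))"
    by simp
qed

section \<open>Counting dominators\<close>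

lemma cycle_subgraph_dominators:
  assumes "4 \<le> n" "E \<subseteq> cycle_edges n" "dominated_coloring {0..<n} E c"
  obtains W where "W \<subseteq> {0..<n}" "n \<le> card (c ` {0..<n}) + card W"
    and "\<And>w. w \<in> W \<Longrightarrow> cycle_neighbours n w \<subseteq> {v. {v, w} \<in> E}"
    and "\<And>w. w \<in> W \<Longrightarrow> (w + 2) mod n \<notin> W"
proof -
  define V where "V = {0..<n}"
  define cls where "cls i = {v \<in> V. c v = i}" for i
  have "\<forall>i\<in>c ` V. \<exists>w. w \<in> V \<and> cls i \<subseteq> {v. {v, w} \<in> E}"
    using assms(3) unfolding dominated_coloring_def V_def cls_def by blast
  then obtain d where d: "\<And>i. i \<in> c ` V \<Longrightarrow> d i \<in> V \<and> cls i \<subseteq> {v. {v, d i} \<in> E}"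
    by metis
  have finite_nbrs: "finite (cycle_neighbours n w)" for w
    using finite_subset[OF cycle_neighbours_subset] by blast
  have cls_nbrs: "cls i \<subseteq> cycle_neighbours n (d i)" if "i \<in> c ` V" for i
    using d[OF that] assms(2) unfolding cycle_neighbours_def by blast
  define K2 where "K2 = {i \<in> c ` V. card (cls i) = 2}"
  have cls_K2: "cls i = cycle_neighbours n (d i)" if "i \<in> K2" for i
    using card_seteq[OF finite_nbrs cls_nbrs] card_cycle_neighbours that unfolding K2_def by auto
  have "inj_on d K2"
  proof (rule inj_onI)
    fix i j assume "i \<in> K2" "j \<in> K2" "d i = d j"
    then have "cls i = cls j"
      using cls_K2 by metis
    moreover have "cls i \<noteq> {}"
      using \<open>i \<in> K2\<close> unfolding K2_def by auto
    ultimately show "i = j"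
      unfolding cls_def by blast
  qed
  have card_cls: "card (cls i) \<le> 2" if "i \<in> c ` V" for i
    using card_mono[OF finite_nbrs cls_nbrs[OF that]] card_cycle_neighbours by (rule order_trans)
  have "card V \<le> card (c ` V) + card K2"
    unfolding K2_def cls_def
  proof (rule card_le_card_image_add_card_pairs)
    show "finite V"
      by (simp add: V_def)
  qed (rule card_cls[unfolded cls_def])
  show ?thesis
  proof (rule that[of "d ` K2"])
    show "d ` K2 \<subseteq> {0..<n}"
      using d unfolding K2_def V_def by blast
    show "n \<le> card (c ` {0..<n}) + card (d ` K2)"
      using \<open>card V \<le> card (c ` V) + card K2\<close> card_image[OF \<open>inj_on d K2\<close>] by (simp add: V_def)
  next
    fix w assume "w \<in> d ` K2"
    then obtain i where i: "i \<in> K2" "w = d i"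
      by blast
    then show "cycle_neighbours n w \<subseteq> {v. {v, w} \<in> E}"
      using cls_K2 d unfolding K2_def by blast
    show "(w + 2) mod n \<notin> d ` K2"
    proof
      assume "(w + 2) mod n \<in> d ` K2"
      then obtain j where j: "j \<in> K2" "(w + 2) mod n = d j"
        by blast
      have "w < n"
        using i d unfolding K2_def V_def by auto
      then have "(w + 1) mod n \<in> cls i \<inter> cls j"
        using cycle_neighbours_share_middle cls_K2 i j by metis
      then have "i = j"
        unfolding cls_def by blast
      then show False
        using i j mod_add_two_neq[OF \<open>w < n\<close>] assms(1) by simp
    qed
  qed
qed

lemma step2_free_card_le:
  fixes n :: nat
  assumes "finite S" "W \<subseteq> {0..<n}" "W \<subseteq> S" "\<And>w. w \<in> W \<Longrightarrow> (w + 2) mod n \<in> S"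
    and "\<And>w. w \<in> W \<Longrightarrow> (w + 2) mod n \<notin> W"
  shows "2 * card W \<le> card S"
proof -
  let ?f = "cycle_rotate n 2"
  have "finite W"
    using assms(1,3) finite_subset by blast
  have "inj_on ?f W"
  proof (cases "n = 0")
    case False
    then show ?thesis
      using cycle_rotate_bij[of n 2] assms(2) bij_betw_imp_inj_on inj_on_subset by blast
  qed (use assms(2) in simp)
  moreover have "W \<inter> ?f ` W = {}"
    using assms(5) by (auto simp: cycle_rotate_def)
  ultimately have "card (W \<union> ?f ` W) = 2 * card W"
    using \<open>finite W\<close> by (simp add: card_Un_disjoint card_image)
  moreover have "W \<union> ?f ` W \<subseteq> S"
    using assms(3,4) by (auto simp: cycle_rotate_def)
  ultimately show ?thesis
    using card_mono[OF assms(1)] by metis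
qed

(* If 2 |W| >= n, then W and W + 2 partition the vertices, so membership in W alternates
   along 0, 2, 4, ..., which returns to 0 after the odd number n/2 of steps. *)
lemma step2_free_card_less:
  assumes "n mod 4 = 2" "W \<subseteq> {0..<n}" "\<And>w. w \<in> W \<Longrightarrow> (w + 2) mod n \<notin> W"
  shows "2 * card W < n"
proof (rule ccontr)
  assume "\<not> 2 * card W < n"
  obtain q where n: "n = 4 * q + 2"
    using assms(1) div_mult_mod_eq[of n 4] by (metis add.commute mult.commute)
  define f where "f = cycle_rotate n 2"
  have f_lt: "f x < n" for x
    using n by (simp add: f_def cycle_rotate_def)
  have inj: "inj_on f {0..<n}"
    using cycle_rotate_bij[of n 2] n unfolding f_def bij_betw_def by simp
  have "finite W"
    using assms(2) finite_subset by blast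
  have "W \<inter> f ` W = {}"
    using assms(3) by (auto simp: f_def cycle_rotate_def)
  then have "card (W \<union> f ` W) = 2 * card W"
    using \<open>finite W\<close> card_image[OF inj_on_subset[OF inj assms(2)]] by (simp add: card_Un_disjoint)
  then have cover: "W \<union> f ` W = {0..<n}"
    using \<open>\<not> 2 * card W < n\<close> assms(2) f_lt by (intro card_seteq) auto
  have flip: "f x \<in> W \<longleftrightarrow> x \<notin> W" if "x < n" for x
  proof
    assume "f x \<in> W"
    then show "x \<notin> W"
      using assms(3) by (auto simp: f_def cycle_rotate_def)
  next
    assume "x \<notin> W"
    show "f x \<in> W"
    proof (rule ccontr)
      assume "f x \<notin> W"
      then obtain w where "w \<in> W" "f w = f x"
        using cover f_lt[of x] by (metis Un_iff atLeastLessThan_iff imageE zero_le)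
      then have "w = x"
        using inj assms(2) that unfolding inj_on_def by auto
      then show False
        using \<open>x \<notin> W\<close> \<open>w \<in> W\<close> by simp
    qed
  qed
  have iterate: "(2 * m) mod n \<in> W \<longleftrightarrow> (0 \<in> W \<longleftrightarrow> even m)" for m
  proof (induction m)
    case 0
    then show ?case
      using n by simp
  next
    case (Suc m)
    have "(2 * Suc m) mod n = f ((2 * m) mod n)"
      unfolding f_def cycle_rotate_def by (simp add: mod_simps)
    then show ?case
      using flip[of "(2 * m) mod n"] Suc.IH n by simp
  qed
  show False
    using iterate[of "2 * q + 1"] n by simp
qed

lemma cycle_minus_edges_lower_bound:
  assumes "4 \<le> n" "F \<subseteq> cycle_edges n" "dominated_coloring {0..<n} (cycle_edges n - F) c"
    and "finite S" "\<And>w. w < n \<Longrightarrow> w \<notin> \<Union>F \<Longrightarrow> w \<in> S \<and> (w + 2) mod n \<in> S"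
  shows "n \<le> card (c ` {0..<n}) + card S div 2"
proof -
  obtain W where W: "W \<subseteq> {0..<n}" "n \<le> card (c ` {0..<n}) + card W"
    "\<And>w. w \<in> W \<Longrightarrow> cycle_neighbours n w \<subseteq> {v. {v, w} \<in> cycle_edges n - F}"
    "\<And>w. w \<in> W \<Longrightarrow> (w + 2) mod n \<notin> W"
    by (rule cycle_subgraph_dominators[OF assms(1) Diff_subset assms(3)]) (rule that)
  have "w \<notin> \<Union>F" if "w \<in> W" for w
  proof
    assume "w \<in> \<Union>F"
    then obtain e where "e \<in> F" "w \<in> e"
      by blast
    then obtain i where "e = {i, (i + 1) mod n}"
      using assms(2) unfolding cycle_edges_def by blast
    then obtain v where "e = {v, w}"
      using \<open>w \<in> e\<close> by (metis insert_commute insertE singletonD)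
    then have "v \<in> cycle_neighbours n w"
      using \<open>e \<in> F\<close> assms(2) unfolding cycle_neighbours_def by blast
    then show False
      using W(3)[OF that] \<open>e \<in> F\<close> \<open>e = {v, w}\<close> by blast
  qed
  then have "2 * card W \<le> card S"
    using assms(5) W(1) by (intro step2_free_card_le[OF assms(4) W(1) _ _ W(4)]) auto
  then show ?thesis
    using W(2) by linarith
qed

lemma chi_dom_cycle:
  assumes "4 \<le> n"
  shows "chi_dom {0..<n} (cycle_edges n) = dom_chi n"
proof (rule antisym)
  have "classes_dominated {0..<n} (cycle_edges n) path_coloring"
    by (rule classes_dominated_mono[OF path_classes_dominated[OF assms]]) blast
  then have path_dom: "dominated_coloring {0..<n} (cycle_edges n) path_coloring"
    unfolding dominated_coloring_iff_classes_dominated[OF triangle_free_cycle_subgraph[OF assms order_refl]] .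
  show "chi_dom {0..<n} (cycle_edges n) \<le> dom_chi n"
    using chi_dom_le[OF path_dom] card_path_coloring_image_le by (rule order_trans)
  have "has_dominated_coloring {0..<n} (cycle_edges n)"
    using path_dom unfolding has_dominated_coloring_def by blast
  then obtain c where c: "dominated_coloring {0..<n} (cycle_edges n) c"
    "card (c ` {0..<n}) = chi_dom {0..<n} (cycle_edges n)"
    by (rule chi_dom_attained)
  obtain W where W: "W \<subseteq> {0..<n}" "n \<le> card (c ` {0..<n}) + card W"
    "\<And>w. w \<in> W \<Longrightarrow> (w + 2) mod n \<notin> W"
    by (rule cycle_subgraph_dominators[OF assms order_refl c(1)]) (rule that)
  have "2 * card W \<le> card {0..<n}"
    by (rule step2_free_card_le[OF finite_atLeastLessThan W(1) W(1) _ W(3)]) (use assms in simp)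
  then have "2 * card W \<le> n"
    by simp
  moreover have "n mod 4 = 2 \<Longrightarrow> 2 * card W < n"
    using step2_free_card_less W(1,3) by blast
  ultimately have "dom_chi n \<le> card (c ` {0..<n})"
    by (rule dom_chi_le_from_dominators[OF W(2)])
  then show "dom_chi n \<le> chi_dom {0..<n} (cycle_edges n)"
    unfolding c(2) .
qed

lemma chi_dom_cycle_le_minus_edges:
  assumes "4 \<le> n" "has_dominated_coloring {0..<n} (cycle_edges n - F)"
  shows "chi_dom {0..<n} (cycle_edges n) \<le> chi_dom {0..<n} (cycle_edges n - F)"
proof -
  obtain c where c: "dominated_coloring {0..<n} (cycle_edges n - F) c"
    "card (c ` {0..<n}) = chi_dom {0..<n} (cycle_edges n - F)"
    using assms(2) by (rule chi_dom_attained)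
  have "classes_dominated {0..<n} (cycle_edges n) c"
    using c(1)
    unfolding dominated_coloring_iff_classes_dominated[OF triangle_free_cycle_subgraph[OF assms(1) Diff_subset]]
    by (rule classes_dominated_mono) blast
  then have "dominated_coloring {0..<n} (cycle_edges n) c"
    unfolding dominated_coloring_iff_classes_dominated[OF triangle_free_cycle_subgraph[OF assms(1) order_refl]] .
  then show ?thesis
    using chi_dom_le c(2) by metis
qed

section \<open>Removing edges from the cycle\<close>

lemma cycle_minus_matching_has_dominated_coloring:
  assumes "4 \<le> n" "F \<subseteq> cycle_edges n" "pairwise disjnt F"
  shows "has_dominated_coloring {0..<n} (cycle_edges n - F)"
proof -
  have "\<exists>w\<in>{0..<n}. {u, w} \<in> cycle_edges n - F" if "u < n" for u
  proof -
    let ?p = "(u + n - 1) mod n" and ?s = "(u + 1) mod n"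
    have edges: "{?p, u} \<in> cycle_edges n" "{u, ?s} \<in> cycle_edges n"
      using that by (rule cycle_edge_before, rule cycle_edgeI)
    have "(?p + 2) mod n = (u + n - 1 + 2) mod n"
      by (rule mod_add_left_eq)
    also have "\<dots> = (u + 1 + n) mod n"
      by (rule arg_cong[where f = "\<lambda>x. x mod n"]) (use that in simp)
    also have "\<dots> = ?s"
      by (rule mod_add_self2)
    finally have "?p \<noteq> ?s"
      using mod_add_two_neq[of ?p n] assms(1) that by simp
    then have "{?p, u} \<noteq> {u, ?s}" "\<not> disjnt {?p, u} {u, ?s}"
      by (auto simp: doubleton_eq_iff)
    then consider "{?p, u} \<notin> F" | "{u, ?s} \<notin> F"
      using pairwiseD[OF assms(3), of "{?p, u}" "{u, ?s}"] by blast
    then show ?thesis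
    proof cases
      case 1
      then show ?thesis
        using edges(1) that by (intro bexI[of _ ?p]) (simp_all add: insert_commute)
    next
      case 2
      then show ?thesis
        using edges(2) that by (intro bexI[of _ ?s]) simp_all
    qed
  qed
  then have "classes_dominated {0..<n} (cycle_edges n - F) id"
    unfolding classes_dominated_def by simp
  then have "dominated_coloring {0..<n} (cycle_edges n - F) id"
    unfolding dominated_coloring_iff_classes_dominated[OF triangle_free_cycle_subgraph[OF assms(1) Diff_subset]] .
  then show ?thesis
    unfolding has_dominated_coloring_def by blast
qed

lemma cycle_minus_two_edges_chi_dom_gt:
  assumes "4 \<le> n" "n mod 4 \<noteq> 2"
  obtains F where "F \<subseteq> cycle_edges n" "card F = 2"
    "has_dominated_coloring {0..<n} (cycle_edges n - F)"
    "dom_chi n < chi_dom {0..<n} (cycle_edges n - F)"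
proof -
  let ?F = "{{n - 1, 0}, {1, 2}}"
  have F: "?F \<subseteq> cycle_edges n"
    using assms(1) by (simp add: cycle_edge_iff)
  have "pairwise disjnt ?F"
    using assms(1) by (auto simp: pairwise_def disjnt_def)
  then have has: "has_dominated_coloring {0..<n} (cycle_edges n - ?F)"
    by (rule cycle_minus_matching_has_dominated_coloring[OF assms(1) F])
  then obtain c where c: "dominated_coloring {0..<n} (cycle_edges n - ?F) c"
    "card (c ` {0..<n}) = chi_dom {0..<n} (cycle_edges n - ?F)"
    by (rule chi_dom_attained)
  have "n \<le> card (c ` {0..<n}) + card (insert 0 {3..<n}) div 2"
    by (rule cycle_minus_edges_lower_bound[OF assms(1) F c(1)]) (use assms(1) in \<open>auto simp: mod_if\<close>)
  moreover have "card (insert 0 {3..<n}) = n - 2"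
    using assms(1) by simp
  ultimately have "dom_chi n < chi_dom {0..<n} (cycle_edges n - ?F)"
    using assms c(2) by (intro dom_chi_less_from_dominators[of n _ "(n - 2) div 2"]) simp_all
  moreover have "card ?F = 2"
    using assms(1) by (simp add: doubleton_eq_iff)
  ultimately show ?thesis
    using that F has by blast
qed

lemma cycle_minus_three_edges_chi_dom_gt:
  assumes "4 \<le> n" "n mod 4 = 2"
  obtains F where "F \<subseteq> cycle_edges n" "card F = 3"
    "has_dominated_coloring {0..<n} (cycle_edges n - F)"
    "dom_chi n < chi_dom {0..<n} (cycle_edges n - F)"
proof -
  let ?F = "{{n - 1, 0}, {1, 2}, {3, 4}}"
  have "6 \<le> n"
    using assms by presburger
  have F: "?F \<subseteq> cycle_edges n"
    using \<open>6 \<le> n\<close> by (simp add: cycle_edge_iff)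
  have "pairwise disjnt ?F"
    using \<open>6 \<le> n\<close> by (auto simp: pairwise_def disjnt_def)
  then have has: "has_dominated_coloring {0..<n} (cycle_edges n - ?F)"
    by (rule cycle_minus_matching_has_dominated_coloring[OF assms(1) F])
  then obtain c where c: "dominated_coloring {0..<n} (cycle_edges n - ?F) c"
    "card (c ` {0..<n}) = chi_dom {0..<n} (cycle_edges n - ?F)"
    by (rule chi_dom_attained)
  have "n \<le> card (c ` {0..<n}) + card (insert 0 {5..<n}) div 2"
    by (rule cycle_minus_edges_lower_bound[OF assms(1) F c(1)]) (use \<open>6 \<le> n\<close> in \<open>auto simp: mod_if\<close>)
  moreover have "card (insert 0 {5..<n}) = n - 4"
    using \<open>6 \<le> n\<close> by simp
  ultimately have "dom_chi n < chi_dom {0..<n} (cycle_edges n - ?F)"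
    using \<open>6 \<le> n\<close> c(2) by (intro dom_chi_less_from_dominators[of n _ "(n - 4) div 2"]) simp_all
  moreover have "card ?F = 3"
    using \<open>6 \<le> n\<close> by (simp add: doubleton_eq_iff)
  ultimately show ?thesis
    using that F has by blast
qed

lemma cycle_edge_set_raising_chi_dom:
  assumes "4 \<le> n"
  obtains F where "F \<subseteq> cycle_edges n" "card F = (if n mod 4 = 2 then 3 else 2)"
    "has_dominated_coloring {0..<n} (cycle_edges n - F)"
    "dom_chi n < chi_dom {0..<n} (cycle_edges n - F)"
proof (cases "n mod 4 = 2")
  case True
  then show ?thesis
    using that cycle_minus_three_edges_chi_dom_gt[OF assms] by (metis (full_types))
next
  case False
  then show ?thesis
    using that cycle_minus_two_edges_chi_dom_gt[OF assms] by (metis (full_types))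
qed

lemma chi_dom_cycle_minus_edge_le:
  assumes "4 \<le> n" "e \<in> cycle_edges n"
  shows "chi_dom {0..<n} (cycle_edges n - {e}) \<le> dom_chi n"
proof -
  obtain j where j: "j < n" "e = {j, (j + 1) mod n}"
    using assms(2) unfolding cycle_edges_def by blast
  have "image (cycle_rotate n (n - 1 - j)) ` {e} = {{n - 1, 0}}"
    using cycle_rotate_to_last_edge[OF j(1)] j(2) by simp
  then have "chi_dom {0..<n} (cycle_edges n - {e}) = chi_dom {0..<n} (cycle_edges n - {{n - 1, 0}})"
    using chi_dom_cycle_minus_rotate(1)[of n "{e}" "n - 1 - j"] assms by simp
  also have "\<dots> \<le> card (path_coloring ` {0..<n})"
    by (rule chi_dom_cycle_subgraph_le[OF assms(1) Diff_subset path_classes_dominated[OF assms(1)]])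
  also have "\<dots> \<le> dom_chi n"
    by (rule card_path_coloring_image_le)
  finally show ?thesis .
qed

lemma cycle_minus_two_edges_normal_form:
  assumes "4 \<le> n" "F \<subseteq> cycle_edges n" "card F = 2"
    and "has_dominated_coloring {0..<n} (cycle_edges n - F)"
  obtains k where "1 \<le> k" "k + 3 \<le> n"
    "chi_dom {0..<n} (cycle_edges n - F) = chi_dom {0..<n} (cycle_edges n - {{n - 1, 0}, {k, k + 1}})"
proof -
  obtain s k where k: "k < n" "k \<noteq> n - 1"
    and G: "image (cycle_rotate n s) ` F = {{n - 1, 0}, {k, (k + 1) mod n}}"
    by (rule cycle_rotate_two_edges[OF assms(1-3)])
  let ?G = "{{n - 1, 0}, {k, (k + 1) mod n}}"
  have "0 < n"
    using assms(1) by simp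
  note rotated = chi_dom_cycle_minus_rotate[OF \<open>0 < n\<close> assms(2), of s, unfolded G]
  have has: "has_dominated_coloring {0..<n} (cycle_edges n - ?G)"
    using rotated(2) assms(4) ..
  have "{0, 1} \<notin> ?G"
    using cycle_minus_edges_keeps_edge_at[OF has, of 0] assms(1) by simp
  then have "k \<noteq> 0"
    using assms(1) by auto
  have "n - 1 + n - 1 = n - 2 + n"
    using assms(1) by simp
  then have "(n - 1 + n - 1) mod n = (n - 2 + n) mod n"
    by (rule arg_cong)
  also have "\<dots> = n - 2"
    unfolding mod_add_self2 using assms(1) by simp
  finally have "{n - 2, n - 1} \<notin> ?G"
    using cycle_minus_edges_keeps_edge_at[OF has, of "n - 1"] assms(1) by simp
  moreover have "k + 1 = n - 1 \<Longrightarrow> (k + 1) mod n = n - 1"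
    using assms(1) by simp
  ultimately have "k \<noteq> n - 2"
    using assms(1) by auto
  then have k_bounds: "1 \<le> k" "k + 3 \<le> n"
    using k \<open>k \<noteq> 0\<close> by auto
  then have "?G = {{n - 1, 0}, {k, k + 1}}"
    by simp
  then show ?thesis
    using that[OF k_bounds] rotated(1) by simp
qed

(* The two paths left after removing {n - 1, 0} and {k, k + 1} are coloured separately,
   which costs no extra colour because n mod 4 = 2. *)
lemma chi_dom_cycle_minus_two_edges_le:
  assumes "4 \<le> n" "n mod 4 = 2" "F \<subseteq> cycle_edges n" "card F = 2"
    and "has_dominated_coloring {0..<n} (cycle_edges n - F)"
  shows "chi_dom {0..<n} (cycle_edges n - F) \<le> dom_chi n"
proof -
  obtain k where k: "1 \<le> k" "k + 3 \<le> n"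
    and "chi_dom {0..<n} (cycle_edges n - F) = chi_dom {0..<n} (cycle_edges n - {{n - 1, 0}, {k, k + 1}})"
    by (rule cycle_minus_two_edges_normal_form[OF assms(1,3-5)])
  define c where "c i = (if i \<le> k then path_coloring i else dom_chi (k + 1) + path_coloring (i - (k + 1)))" for i
  note two_paths = two_paths_classes_dominated[OF assms(1) k, folded c_def]
  have "chi_dom {0..<n} (cycle_edges n - F) \<le> card (c ` {0..<n})"
    unfolding \<open>chi_dom {0..<n} (cycle_edges n - F) = _\<close>
    by (rule chi_dom_cycle_subgraph_le[OF assms(1) Diff_subset two_paths(1)])
  also have "\<dots> \<le> dom_chi (k + 1) + dom_chi (n - (k + 1))"
    by (rule two_paths(2))
  also have "\<dots> \<le> dom_chi n"
    using dom_chi_add_le[of "k + 1" "n - (k + 1)"] assms(2) k by simp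
  finally show ?thesis .
qed

lemma chi_dom_cycle_minus_few_edges_le:
  assumes "4 \<le> n" "F \<subseteq> cycle_edges n" "has_dominated_coloring {0..<n} (cycle_edges n - F)"
    and "card F < (if n mod 4 = 2 then 3 else 2)"
  shows "chi_dom {0..<n} (cycle_edges n - F) \<le> dom_chi n"
proof -
  have "finite F"
    using assms(2) finite_cycle_edges finite_subset by blast
  consider "F = {}" | e where "F = {e}" | "card F = 2" "n mod 4 = 2"
  proof -
    have "card F = 0 \<or> card F = 1 \<or> (card F = 2 \<and> n mod 4 = 2)"
      using assms(4) by (cases "n mod 4 = 2") auto
    then show ?thesis
      using that \<open>finite F\<close> by (auto simp: card_1_singleton_iff)
  qed
  then show ?thesis
  proof cases
    case 1
    then show ?thesis
      using chi_dom_cycle[OF assms(1)] by simp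
  next
    case 2
    then show ?thesis
      using chi_dom_cycle_minus_edge_le[OF assms(1)] assms(2) by simp
  next
    case 3
    then show ?thesis
      using chi_dom_cycle_minus_two_edges_le[OF assms(1) _ assms(2) _ assms(3)] by simp
  qed
qed

lemma chi_dom_cycle_minus_few_edges:
  assumes "4 \<le> n" "F \<subseteq> cycle_edges n" "has_dominated_coloring {0..<n} (cycle_edges n - F)"
    and "card F < (if n mod 4 = 2 then 3 else 2)"
  shows "chi_dom {0..<n} (cycle_edges n - F) = chi_dom {0..<n} (cycle_edges n)"
  using chi_dom_cycle_minus_few_edges_le[OF assms] chi_dom_cycle_le_minus_edges[OF assms(1,3)]
  unfolding chi_dom_cycle[OF assms(1)] by (rule antisym)

theorem mainTheorem14:
  fixes n :: nat
  assumes "n \<ge> 4"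
  shows "B_dom {0..<n} (cycle_edges n) = (if n mod 4 = 2 then 3 else 2)"
  unfolding B_dom_def
proof (rule Least_equality, goal_cases)
  case 1
  obtain F where "F \<subseteq> cycle_edges n" "card F = (if n mod 4 = 2 then 3 else 2)"
    "has_dominated_coloring {0..<n} (cycle_edges n - F)"
    "dom_chi n < chi_dom {0..<n} (cycle_edges n - F)"
    by (rule cycle_edge_set_raising_chi_dom[OF assms])
  then show ?case
    unfolding chi_dom_cycle[OF assms] by (intro exI[of _ F]) simp
next
  case (2 m)
  then obtain F where "F \<subseteq> cycle_edges n" "card F = m"
    "has_dominated_coloring {0..<n} (cycle_edges n - F)"
    "chi_dom {0..<n} (cycle_edges n - F) \<noteq> chi_dom {0..<n} (cycle_edges n)"
    by blast
  then show ?case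
    using chi_dom_cycle_minus_few_edges[OF assms] by (meson not_le)
qed

end
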